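(* Let $\Omega\subset\mathbb R^d$ be a bounded open set, $L>0$, $n\in\mathbb Z_+$, $X=\overline\Omega\times[-L,L]^n$, $\varepsilon>0$, $N\in\mathbb N$, and points $\bar x_1,\dots,\bar x_N\in\Omega$. Suppose $G_n,G:\mathcal P(X)\to\mathcal P(X)$ satisfy $\lim_{n\to\infty}W_1(G_n(\mu),G(\mu))=0$ for all $\mu\in\mathcal P(X)$. Then for each $h\in C(\overline\Omega;[-L,L]^n)$, $$\mathbf F_\varepsilon\circ G\circ\mathbf M_N(h)=\lim_{n\to\infty}\mathbf F_\varepsilon\circ G_n\circ\mathbf M_N(h),$$ with convergence in $C(\overline\Omega;\mathbb R^n)$ (hence also in $H^{-s}(\Omega;\mathbb R^n)$ for every $s\ge0$). The same holds with $(G_n)_n$ replaced by a family $(G_\eta)_{\eta>0}$ and $n\to\infty$ replaced by $\eta\to0$.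
   Context: $\mathcal P(X)$: Borel probability measures with the $W_1$ metric. $\mathbf M_N(h)=\frac1N\sum_{j=1}^N\delta_{(\bar x_j,h(\bar x_j))}$. With $\rho\in C_c^\infty(\mathbb R^d)$ a mollifier ($\int\rho=1$, $\mathrm{supp}\,\rho\subset B(0,1)$, $\rho$ even), $(\mathbf F_\varepsilon\gamma)(x)=\frac{\mathrm{vol}(\Omega)}{\varepsilon^d}\int_X\rho(\frac{x'-x}{\varepsilon})\,y'\,d\gamma(x',y')$, $x\in\overline\Omega$. *)

theory Defs
  imports "HOL-Probability.Probability"
begin

text \<open>C-infinity smoothness of a real function on R^d: differentiable everywhere and all
  first-order partial derivatives are again smooth (coinductively: partial derivatives of
  every order exist and are differentiable).\<close>
coinductive smooth_fun :: "(real^'d \<Rightarrow> real) \<Rightarrow> bool" where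
  "(\<forall>x. f differentiable (at x)) \<Longrightarrow>
   (\<forall>i. smooth_fun (\<lambda>x. frechet_derivative f (at x) (axis i 1))) \<Longrightarrow> smooth_fun f"

definition mollifier :: "(real^'d \<Rightarrow> real) \<Rightarrow> bool" where
  "mollifier \<rho> \<longleftrightarrow> smooth_fun \<rho> \<and> compact (closure {x. \<rho> x \<noteq> 0})
     \<and> closure {x. \<rho> x \<noteq> 0} \<subseteq> ball 0 1 \<and> (\<rho> has_integral 1) UNIV \<and> (\<forall>x. \<rho> (-x) = \<rho> x)"

definition Lbox :: "real \<Rightarrow> (real^'n) set" where
  "Lbox L = {y. \<forall>i. -L \<le> y $ i \<and> y $ i \<le> L}"

definition Xset :: "(real^'d) set \<Rightarrow> real \<Rightarrow> ((real^'d) \<times> (real^'n)) set" where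
  "Xset \<Omega> L = closure \<Omega> \<times> Lbox L"

text \<open>Borel probability measures on X (realised as Borel probability measures on the ambient
  Euclidean space R^d x R^n concentrated on X).\<close>
definition Prob :: "('a::topological_space) set \<Rightarrow> 'a measure set" where
  "Prob X = {\<mu>. sets \<mu> = sets borel \<and> prob_space \<mu> \<and> emeasure \<mu> X = 1}"

definition couplings :: "('a::topological_space) measure \<Rightarrow> 'a measure \<Rightarrow> ('a \<times> 'a) measure set" where
  "couplings \<mu> \<nu> = {\<pi>. sets \<pi> = sets borel \<and> prob_space \<pi>
      \<and> distr \<pi> borel fst = \<mu> \<and> distr \<pi> borel snd = \<nu>}"

definition W1 :: "('a::metric_space) measure \<Rightarrow> 'a measure \<Rightarrow> ennreal" where
  "W1 \<mu> \<nu> = (INF \<pi>\<in>couplings \<mu> \<nu>. \<integral>\<^sup>+ p. ennreal (dist (fst p) (snd p)) \<partial>\<pi>)"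

definition empirical :: "nat \<Rightarrow> (nat \<Rightarrow> real^'d) \<Rightarrow> (real^'d \<Rightarrow> real^'n)
     \<Rightarrow> ((real^'d) \<times> (real^'n)) measure" where
  "empirical N xb h = measure_of UNIV (sets borel)
     (\<lambda>A. (\<Sum>j\<in>{1..N}. emeasure (return borel (xb j, h (xb j))) A) / of_nat N)"

definition Feps :: "(real^'d \<Rightarrow> real) \<Rightarrow> (real^'d) set \<Rightarrow> real \<Rightarrow> ((real^'d) \<times> (real^'n)) measure
     \<Rightarrow> real^'d \<Rightarrow> real^'n" where
  "Feps \<rho> \<Omega> \<epsilon> \<gamma> x = (measure lborel \<Omega> / \<epsilon> ^ CARD('d)) *\<^sub>R
     (\<integral>p. \<rho> ((1/\<epsilon>) *\<^sub>R (fst p - x)) *\<^sub>R snd p \<partial>\<gamma>)"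

end

theory Submission
  imports Defs
begin

text \<open>
  If \<open>W1 \<nu>\<^sub>k \<nu>\<^sub>0 \<rightarrow> 0\<close>, then \<open>\<nu>\<^sub>k\<close> and \<open>\<nu>\<^sub>0\<close> admit couplings of small transport cost, and
  integrating against a coupling shows \<open>|\<integral>f d\<nu>\<^sub>k - \<integral>f d\<nu>\<^sub>0| \<le> e + K \<cdot> cost\<close> whenever
  \<open>|f p - f q| \<le> e + K d(p,q)\<close> on \<open>X\<close>. A bounded uniformly continuous \<open>f\<close> satisfies such a
  bound for every \<open>e > 0\<close>. The kernel \<open>(x,(x',y')) \<mapsto> \<rho>((x'-x)/\<epsilon>) y'\<close> of \<open>F\<^sub>\<epsilon>\<close> is
  continuous on the compact set \<open>closure \<Omega> \<times> X\<close>, so its sections are uniformly bounded and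
  equicontinuous, and the estimate is uniform in \<open>x \<in> closure \<Omega>\<close>.
\<close>

lemma mollifier_continuous:
  assumes "mollifier \<rho>"
  shows "continuous_on UNIV \<rho>"
proof -
  have "smooth_fun \<rho>"
    using assms unfolding mollifier_def by blast
  then have "\<forall>x. \<rho> differentiable (at x)"
    by (cases rule: smooth_fun.cases) auto
  then show ?thesis
    by (simp add: continuous_at_imp_continuous_on differentiable_imp_continuous_within)
qed

lemma Lbox_eq_cbox: "Lbox L = cbox (\<chi> i. - L) (\<chi> i. L)"
  by (auto simp: Lbox_def mem_box_cart)

lemma compact_Xset:
  assumes "bounded \<Omega>"
  shows "compact (Xset \<Omega> L)"
  unfolding Xset_def Lbox_eq_cbox using assms by (intro compact_Times compact_cbox) simp

lemma uniformly_continuous_on_Times_equicontinuous: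
  fixes f :: "'a::metric_space \<times> 'b::metric_space \<Rightarrow> 'c::metric_space"
  assumes "uniformly_continuous_on (A \<times> X) f" and "e > 0"
  obtains \<delta> where "\<delta> > 0"
    and "\<And>x p q. x \<in> A \<Longrightarrow> p \<in> X \<Longrightarrow> q \<in> X \<Longrightarrow> dist p q < \<delta> \<Longrightarrow> dist (f (x, p)) (f (x, q)) < e"
proof -
  obtain \<delta> where "\<delta> > 0"
    and "\<forall>z\<in>A \<times> X. \<forall>z'\<in>A \<times> X. dist z' z < \<delta> \<longrightarrow> dist (f z') (f z) < e"
    using assms unfolding uniformly_continuous_on_def by metis
  moreover have "dist (x, p) (x, q) = dist p q" for x :: 'a and p q :: 'b
    by (simp add: dist_Pair_Pair)
  ultimately show thesis
    by (intro that[of \<delta>]) (auto simp: dist_commute)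
qed

lemma empirical_Prob:
  fixes xb :: "nat \<Rightarrow> real^'d" and h :: "real^'d \<Rightarrow> real^'n"
  assumes "N \<ge> 1" and "X \<in> sets borel" and "\<And>j. j \<in> {1..N} \<Longrightarrow> (xb j, h (xb j)) \<in> X"
  shows "empirical N xb h \<in> Prob X"
proof -
  define \<mu> where "\<mu> A = (\<Sum>j\<in>{1..N}. emeasure (return borel (xb j, h (xb j))) A) / of_nat N" for A
  have ca: "countably_additive (sets borel) \<mu>"
    unfolding countably_additive_def
  proof (intro allI impI)
    fix A :: "nat \<Rightarrow> ((real^'d) \<times> (real^'n)) set"
    assume A: "range A \<subseteq> sets borel" "disjoint_family A"
    have "(\<Sum>i. \<mu> (A i)) = (\<Sum>i. \<Sum>j\<in>{1..N}. emeasure (return borel (xb j, h (xb j))) (A i)) / of_nat N"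
      unfolding \<mu>_def by (rule ennreal_suminf_divide)
    also have "\<dots> = (\<Sum>j\<in>{1..N}. \<Sum>i. emeasure (return borel (xb j, h (xb j))) (A i)) / of_nat N"
      by (subst suminf_sum) auto
    also have "\<dots> = \<mu> (\<Union> (range A))"
      unfolding \<mu>_def using A by (subst suminf_emeasure) auto
    finally show "(\<Sum>i. \<mu> (A i)) = \<mu> (\<Union> (range A))" .
  qed
  have pos: "positive (sets borel) \<mu>"
    unfolding positive_def \<mu>_def by simp
  have sa: "sigma_algebra UNIV (sets borel)"
    by (metis sets.sigma_algebra_axioms space_borel)
  have emp: "empirical N xb h = measure_of UNIV (sets borel) \<mu>"
    unfolding empirical_def \<mu>_def ..
  have emeasure_emp: "emeasure (empirical N xb h) B = \<mu> B" if "B \<in> sets borel" for B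
    unfolding emp using emeasure_measure_of_sigma[OF sa pos ca that] .
  have full: "\<mu> B = 1" if "B \<in> sets borel" "X \<subseteq> B" for B
  proof -
    have "\<mu> B = (\<Sum>j\<in>{1..N}. 1) / (of_nat N :: ennreal)"
      unfolding \<mu>_def using that assms(3)
      by (intro arg_cong2[where f="(/)"] sum.cong) (auto simp: subset_iff)
    also have "\<dots> = 1"
      using assms(1) by (simp add: of_nat_less_top)
    finally show ?thesis .
  qed
  have "sets (empirical N xb h) = sets borel"
    unfolding emp by (metis sets_measure_of sets.sigma_sets_eq space_borel sets.space_closed)
  moreover have "space (empirical N xb h) = UNIV"
    unfolding emp by (simp add: space_measure_of_conv)
  then have "prob_space (empirical N xb h)"
    by (intro prob_spaceI) (simp add: emeasure_emp full)
  moreover have "emeasure (empirical N xb h) X = 1"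
    using assms(2) by (simp add: emeasure_emp full)
  ultimately show ?thesis
    unfolding Prob_def by blast
qed

lemma Prob_AE_mem:
  assumes "\<nu> \<in> Prob X"
  shows "AE p in \<nu>. p \<in> X"
  using assms prob_space.AE_prob_1[of \<nu> X] by (simp add: Prob_def measure_def)

lemma Prob_integrable:
  fixes f :: "'a::topological_space \<Rightarrow> 'b::{banach, second_countable_topology}"
  assumes "\<nu> \<in> Prob X" and "f \<in> borel_measurable borel" and "\<And>p. p \<in> X \<Longrightarrow> norm (f p) \<le> B"
  shows "integrable \<nu> f"
proof -
  have "sets \<nu> = sets borel" "prob_space \<nu>"
    using assms(1) unfolding Prob_def by auto
  have "AE p in \<nu>. norm (f p) \<le> B"
    using Prob_AE_mem[OF assms(1)] assms(3) by (simp add: eventually_mono)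
  moreover have "f \<in> borel_measurable \<nu>"
    using assms(2) by (simp add: measurable_cong_sets[OF \<open>sets \<nu> = sets borel\<close> refl])
  ultimately show ?thesis
    by (rule finite_measure.integrable_const_bound[OF prob_space.finite_measure[OF \<open>prob_space \<nu>\<close>]])
qed

lemma norm_integral_diff_le_coupling_cost:
  fixes f :: "'a::metric_space \<Rightarrow> 'b::{banach, second_countable_topology}"
  assumes "\<nu>1 \<in> Prob X" and "\<nu>2 \<in> Prob X" and "\<pi> \<in> couplings \<nu>1 \<nu>2"
    and f: "f \<in> borel_measurable borel" and "\<And>p. p \<in> X \<Longrightarrow> norm (f p) \<le> B"
    and lip: "\<And>p q. p \<in> X \<Longrightarrow> q \<in> X \<Longrightarrow> norm (f p - f q) \<le> e + K * dist p q"
    and "e \<ge> 0" and "K \<ge> 0"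
  shows "ennreal (norm (integral\<^sup>L \<nu>1 f - integral\<^sup>L \<nu>2 f))
           \<le> ennreal e + ennreal K * (\<integral>\<^sup>+ p. ennreal (dist (fst p) (snd p)) \<partial>\<pi>)"
proof -
  have sets_\<pi>: "sets \<pi> = sets borel" and "prob_space \<pi>"
    and marginals: "distr \<pi> borel fst = \<nu>1" "distr \<pi> borel snd = \<nu>2"
    using assms(3) unfolding couplings_def by auto
  have marginal: "integral\<^sup>L \<nu> f = (\<integral>p. f (g p) \<partial>\<pi>)
      \<and> integrable \<pi> (\<lambda>p. f (g p)) \<and> (AE p in \<pi>. g p \<in> X)"
    if "\<nu> \<in> Prob X" and \<nu>: "distr \<pi> borel g = \<nu>" and "continuous_on UNIV g" for \<nu> g
  proof -
    have g: "g \<in> borel_measurable \<pi>"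
      using borel_measurable_continuous_onI[OF \<open>continuous_on UNIV g\<close>]
      by (simp add: measurable_cong_sets[OF sets_\<pi> refl])
    have "integrable \<nu> f"
      using Prob_integrable[OF \<open>\<nu> \<in> Prob X\<close> f] assms(5) by blast
    then show ?thesis
      using integral_distr[OF g f] integrable_distr_eq[OF g f]
        AE_distrD[OF g, of "\<lambda>p. p \<in> X"] Prob_AE_mem[OF \<open>\<nu> \<in> Prob X\<close>]
      unfolding \<nu> by blast
  qed
  obtain "integral\<^sup>L \<nu>1 f = (\<integral>p. f (fst p) \<partial>\<pi>)" and int_fst: "integrable \<pi> (\<lambda>p. f (fst p))"
    and AE_fst: "AE p in \<pi>. fst p \<in> X"
    using marginal[OF assms(1) marginals(1)] continuous_on_fst[OF continuous_on_id] by blast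
  moreover obtain "integral\<^sup>L \<nu>2 f = (\<integral>p. f (snd p) \<partial>\<pi>)" and int_snd: "integrable \<pi> (\<lambda>p. f (snd p))"
    and AE_snd: "AE p in \<pi>. snd p \<in> X"
    using marginal[OF assms(2) marginals(2)] continuous_on_snd[OF continuous_on_id] by blast
  ultimately have "ennreal (norm (integral\<^sup>L \<nu>1 f - integral\<^sup>L \<nu>2 f))
      = ennreal (norm (\<integral>p. f (fst p) - f (snd p) \<partial>\<pi>))"
    by simp
  also have "\<dots> \<le> (\<integral>\<^sup>+ p. ennreal (norm (f (fst p) - f (snd p))) \<partial>\<pi>)"
    using int_fst int_snd by (intro integral_norm_bound_ennreal) simp
  also have "\<dots> \<le> (\<integral>\<^sup>+ p. ennreal e + ennreal K * ennreal (dist (fst p) (snd p)) \<partial>\<pi>)"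
    using AE_fst AE_snd
  proof (intro nn_integral_mono_AE, eventually_elim)
    case (elim p)
    then have "ennreal (norm (f (fst p) - f (snd p))) \<le> ennreal (e + K * dist (fst p) (snd p))"
      by (intro ennreal_leI lip)
    then show ?case
      using \<open>e \<ge> 0\<close> \<open>K \<ge> 0\<close> by (simp add: ennreal_mult)
  qed
  also have "\<dots> = ennreal e + ennreal K * (\<integral>\<^sup>+ p. ennreal (dist (fst p) (snd p)) \<partial>\<pi>)"
  proof -
    have "(\<lambda>p. dist (fst p) (snd p)) \<in> borel_measurable \<pi>"
      unfolding measurable_cong_sets[OF sets_\<pi> refl] by (intro borel_measurable_continuous_onI continuous_intros)
    then show ?thesis
      using prob_space.emeasure_space_1[OF \<open>prob_space \<pi>\<close>] by (simp add: nn_integral_add nn_integral_cmult)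
  qed
  finally show ?thesis .
qed

lemma uniform_limit_integral_W1:
  fixes f :: "'i \<Rightarrow> 'a::metric_space \<Rightarrow> 'b::{banach, second_countable_topology}"
  assumes meas: "\<And>i. i \<in> I \<Longrightarrow> f i \<in> borel_measurable borel"
    and bounded: "\<And>i p. i \<in> I \<Longrightarrow> p \<in> X \<Longrightarrow> norm (f i p) \<le> B"
    and equicont: "\<And>e. e > 0 \<Longrightarrow>
      \<exists>\<delta>>0. \<forall>i\<in>I. \<forall>p\<in>X. \<forall>q\<in>X. dist p q < \<delta> \<longrightarrow> dist (f i p) (f i q) < e"
    and \<nu>: "\<forall>\<^sub>F k in F. \<nu> k \<in> Prob X" and \<nu>0: "\<nu>0 \<in> Prob X"
    and W1_lim: "((\<lambda>k. W1 (\<nu> k) \<nu>0) \<longlongrightarrow> 0) F"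
  shows "uniform_limit I (\<lambda>k i. \<integral>p. f i p \<partial>\<nu> k) (\<lambda>i. \<integral>p. f i p \<partial>\<nu>0) F"
proof (rule uniform_limitI)
  fix r :: real
  assume "r > 0"
  define e where "e = r / 2"
  have "e > 0"
    using \<open>r > 0\<close> by (simp add: e_def)
  then obtain \<delta> where "\<delta> > 0"
    and close: "\<And>i p q. i \<in> I \<Longrightarrow> p \<in> X \<Longrightarrow> q \<in> X \<Longrightarrow> dist p q < \<delta> \<Longrightarrow> dist (f i p) (f i q) < e"
    using equicont by metis
  define K where "K = 2 * \<bar>B\<bar> / \<delta>"
  have "K \<ge> 0"
    using \<open>\<delta> > 0\<close> by (simp add: K_def)
  have lip: "norm (f i p - f i q) \<le> e + K * dist p q" if "i \<in> I" "p \<in> X" "q \<in> X" for i p q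
  proof (cases "dist p q < \<delta>")
    case True
    then show ?thesis
      using close[OF that True] \<open>K \<ge> 0\<close> by (simp add: dist_norm add_increasing2)
  next
    case False
    have "norm (f i p - f i q) \<le> 2 * \<bar>B\<bar>"
      using norm_triangle_ineq4[of "f i p" "f i q"] bounded[OF that(1,2)] bounded[OF that(1,3)] by linarith
    also have "\<dots> = K * \<delta>"
      using \<open>\<delta> > 0\<close> by (simp add: K_def)
    also have "\<dots> \<le> K * dist p q"
      using False \<open>K \<ge> 0\<close> by (intro mult_left_mono) auto
    finally show ?thesis
      using \<open>e > 0\<close> by linarith
  qed
  define \<eta> where "\<eta> = e / (K + 1)"
  have "\<eta> > 0" and "K * \<eta> < e"
    using \<open>e > 0\<close> \<open>K \<ge> 0\<close> by (simp_all add: \<eta>_def field_simps)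
  have "\<forall>\<^sub>F k in F. W1 (\<nu> k) \<nu>0 < ennreal \<eta>"
    using order_tendstoD(2)[OF W1_lim] \<open>\<eta> > 0\<close> by simp
  with \<nu> show "\<forall>\<^sub>F k in F. \<forall>i\<in>I. dist (\<integral>p. f i p \<partial>\<nu> k) (\<integral>p. f i p \<partial>\<nu>0) < r"
  proof eventually_elim
    case (elim k)
    then obtain \<pi> where \<pi>: "\<pi> \<in> couplings (\<nu> k) \<nu>0"
      and cost: "(\<integral>\<^sup>+ p. ennreal (dist (fst p) (snd p)) \<partial>\<pi>) < ennreal \<eta>"
      unfolding W1_def INF_less_iff by blast
    show ?case
    proof
      fix i
      assume "i \<in> I"
      have "ennreal (norm ((\<integral>p. f i p \<partial>\<nu> k) - (\<integral>p. f i p \<partial>\<nu>0)))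
          \<le> ennreal e + ennreal K * (\<integral>\<^sup>+ p. ennreal (dist (fst p) (snd p)) \<partial>\<pi>)"
        using \<open>e > 0\<close> \<open>K \<ge> 0\<close> \<open>i \<in> I\<close>
        by (intro norm_integral_diff_le_coupling_cost[OF elim(1) \<nu>0 \<pi> meas bounded lip]) auto
      also have "\<dots> \<le> ennreal e + ennreal K * ennreal \<eta>"
        using cost by (intro add_left_mono mult_left_mono) auto
      also have "\<dots> = ennreal (e + K * \<eta>)"
        using \<open>e > 0\<close> \<open>K \<ge> 0\<close> \<open>\<eta> > 0\<close> by (simp add: ennreal_mult)
      finally have "norm ((\<integral>p. f i p \<partial>\<nu> k) - (\<integral>p. f i p \<partial>\<nu>0)) \<le> e + K * \<eta>"
        using \<open>e > 0\<close> \<open>K \<ge> 0\<close> \<open>\<eta> > 0\<close> by (subst (asm) ennreal_le_iff) auto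
      then show "dist (\<integral>p. f i p \<partial>\<nu> k) (\<integral>p. f i p \<partial>\<nu>0) < r"
        using \<open>K * \<eta> < e\<close> by (simp add: dist_norm e_def)
    qed
  qed
qed

lemma Feps_uniform_limit:
  fixes \<Omega> :: "(real^'d) set" and \<nu> :: "'k \<Rightarrow> ((real^'d) \<times> (real^'n)) measure"
  assumes "mollifier \<rho>" and "bounded \<Omega>"
    and "\<forall>\<^sub>F k in F. \<nu> k \<in> Prob (Xset \<Omega> L)" and "\<nu>0 \<in> Prob (Xset \<Omega> L)"
    and "((\<lambda>k. W1 (\<nu> k) \<nu>0) \<longlongrightarrow> 0) F"
  shows "uniform_limit (closure \<Omega>) (\<lambda>k. Feps \<rho> \<Omega> \<epsilon> (\<nu> k)) (Feps \<rho> \<Omega> \<epsilon> \<nu>0) F"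
proof -
  define \<Phi> :: "(real^'d) \<times> ((real^'d) \<times> (real^'n)) \<Rightarrow> real^'n"
    where "\<Phi> = (\<lambda>(x, p). \<rho> ((1/\<epsilon>) *\<^sub>R (fst p - x)) *\<^sub>R snd p)"
  define S :: "((real^'d) \<times> ((real^'d) \<times> (real^'n))) set"
    where "S = closure \<Omega> \<times> Xset \<Omega> L"
  have "compact S"
    unfolding S_def using \<open>bounded \<Omega>\<close> by (intro compact_Times compact_Xset) simp_all
  moreover have \<Phi>_cont: "continuous_on UNIV \<Phi>"
    unfolding \<Phi>_def case_prod_unfold
    by (intro continuous_intros continuous_on_compose2[OF mollifier_continuous[OF \<open>mollifier \<rho>\<close>]]) auto
  ultimately have "uniformly_continuous_on S \<Phi>" and "bounded (\<Phi> ` S)"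
    by (auto intro: compact_uniformly_continuous compact_imp_bounded compact_continuous_image
        continuous_on_subset)
  then obtain B where B: "\<And>z. z \<in> S \<Longrightarrow> norm (\<Phi> z) \<le> B"
    unfolding bounded_iff by blast
  have "uniform_limit (closure \<Omega>) (\<lambda>k x. \<integral>p. \<Phi> (x, p) \<partial>\<nu> k) (\<lambda>x. \<integral>p. \<Phi> (x, p) \<partial>\<nu>0) F"
  proof (rule uniform_limit_integral_W1[OF _ _ _ assms(3-5)])
    show "(\<lambda>p. \<Phi> (x, p)) \<in> borel_measurable borel" for x
      by (intro borel_measurable_continuous_onI continuous_on_compose2[OF \<Phi>_cont] continuous_intros)
        auto
    show "norm (\<Phi> (x, p)) \<le> B" if "x \<in> closure \<Omega>" "p \<in> Xset \<Omega> L" for x p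
      using B that by (simp add: S_def)
    show "\<exists>\<delta>>0. \<forall>x\<in>closure \<Omega>. \<forall>p\<in>Xset \<Omega> L. \<forall>q\<in>Xset \<Omega> L.
        dist p q < \<delta> \<longrightarrow> dist (\<Phi> (x, p)) (\<Phi> (x, q)) < e" if "e > 0" for e
      using \<open>uniformly_continuous_on S \<Phi>\<close> that unfolding S_def
      by (metis uniformly_continuous_on_Times_equicontinuous)
  qed
  moreover have "Feps \<rho> \<Omega> \<epsilon> \<gamma>
      = (\<lambda>x. (measure lborel \<Omega> / \<epsilon> ^ CARD('d)) *\<^sub>R (\<integral>p. \<Phi> (x, p) \<partial>\<gamma>))" for \<gamma>
    by (simp add: fun_eq_iff Feps_def \<Phi>_def)
  ultimately show ?thesis
    by (simp add: bounded_linear.uniform_limit[OF bounded_linear_scaleR_right])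
qed

theorem propositionF1:
  fixes \<Omega> :: "(real^'d) set" and L \<epsilon> :: real and N :: nat
    and xb :: "nat \<Rightarrow> real^'d" and \<rho> :: "real^'d \<Rightarrow> real"
    and G :: "((real^'d) \<times> (real^'n)) measure \<Rightarrow> ((real^'d) \<times> (real^'n)) measure"
  assumes "open \<Omega>" and "bounded \<Omega>" and "L > 0" and "\<epsilon> > 0" and "N \<ge> 1"
    and "\<forall>j\<in>{1..N}. xb j \<in> \<Omega>"
    and "mollifier \<rho>"
    and "\<forall>\<mu>\<in>Prob (Xset \<Omega> L). G \<mu> \<in> Prob (Xset \<Omega> L)"
  shows
    "(\<forall>Gs :: nat \<Rightarrow> ((real^'d) \<times> (real^'n)) measure \<Rightarrow> ((real^'d) \<times> (real^'n)) measure.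
        (\<forall>k. \<forall>\<mu>\<in>Prob (Xset \<Omega> L). Gs k \<mu> \<in> Prob (Xset \<Omega> L))
        \<and> (\<forall>\<mu>\<in>Prob (Xset \<Omega> L). (\<lambda>k. W1 (Gs k \<mu>) (G \<mu>)) \<longlonglongrightarrow> 0)
        \<longrightarrow> (\<forall>h. continuous_on (closure \<Omega>) h \<and> h ` closure \<Omega> \<subseteq> Lbox L \<longrightarrow>
              uniform_limit (closure \<Omega>)
                (\<lambda>k. Feps \<rho> \<Omega> \<epsilon> (Gs k (empirical N xb h)))
                (Feps \<rho> \<Omega> \<epsilon> (G (empirical N xb h))) sequentially))
     \<and>
     (\<forall>Ge :: real \<Rightarrow> ((real^'d) \<times> (real^'n)) measure \<Rightarrow> ((real^'d) \<times> (real^'n)) measure.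
        (\<forall>\<eta>>0. \<forall>\<mu>\<in>Prob (Xset \<Omega> L). Ge \<eta> \<mu> \<in> Prob (Xset \<Omega> L))
        \<and> (\<forall>\<mu>\<in>Prob (Xset \<Omega> L). ((\<lambda>\<eta>. W1 (Ge \<eta> \<mu>) (G \<mu>)) \<longlongrightarrow> 0) (at_right 0))
        \<longrightarrow> (\<forall>h. continuous_on (closure \<Omega>) h \<and> h ` closure \<Omega> \<subseteq> Lbox L \<longrightarrow>
              uniform_limit (closure \<Omega>)
                (\<lambda>\<eta>. Feps \<rho> \<Omega> \<epsilon> (Ge \<eta> (empirical N xb h)))
                (Feps \<rho> \<Omega> \<epsilon> (G (empirical N xb h))) (at_right 0)))"
proof -
  have empirical_Prob_Xset: "empirical N xb h \<in> Prob (Xset \<Omega> L)"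
    if "h ` closure \<Omega> \<subseteq> Lbox L" for h :: "real^'d \<Rightarrow> real^'n"
  proof (rule empirical_Prob[OF \<open>N \<ge> 1\<close>])
    show "Xset \<Omega> L \<in> sets borel"
      by (rule borel_compact[OF compact_Xset[OF \<open>bounded \<Omega>\<close>]])
    show "(xb j, h (xb j)) \<in> Xset \<Omega> L" if "j \<in> {1..N}" for j
      using assms(6) that closure_subset \<open>h ` closure \<Omega> \<subseteq> Lbox L\<close> by (fastforce simp: Xset_def)
  qed
  have at_right_pos: "\<forall>\<^sub>F \<eta> in at_right 0. (\<eta>::real) > 0"
    by (rule eventually_at_right_less)
  show ?thesis
    using assms(2,7,8) empirical_Prob_Xset
    by (auto intro!: Feps_uniform_limit eventually_mono[OF at_right_pos])
qed

end
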